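(* Let $0<q<\infty$ and $\frac{q}{q+1}<p<\infty$, and let $r=\frac{pq}{pq+p-q}$. Then $$\frac{\sin_{p,q}x}{x}<\left(\frac{p+r\cos_{p,q}^p x}{p+r}\right)^{1/q} \quad \text{for all } x\in\left(0,\tfrac{\pi_{p,q}}{2}\right),$$ and $$\frac{\sinh_{p,q}x}{x}<\left(\frac{p+r\cosh_{p,q}^p x}{p+r}\right)^{1/q} \quad \text{for all } x\in\left(0,\tfrac{\pi_{r,q}}{2}\right).$$
   Context: For $0<q<\infty$ and $\frac{q}{q+1}<p<\infty$: let $F_{p,q}(y)=\int_0^y (1-t^q)^{-1/p}\,dt$ for $y\in[0,1)$ and $\pi_{p,q}=2\int_0^1(1-t^q)^{-1/p}\,dt\in(0,\infty]$ (it equals $\infty$ when $p\le 1$). The function $\sin_{p,q}:[0,\pi_{p,q}/2)\to[0,1)$ is the inverse of $F_{p,q}$ and $\cos_{p,q}x=\frac{d}{dx}\sin_{p,q}x$. Let $G_{p,q}(y)=\int_0^y(1+t^q)^{-1/p}\,dt$ for $y\in[0,\infty)$; its range is $[0,\pi_{r,q}/2)$ with $r=\frac{pq}{pq+p-q}$ (which also satisfies $\frac{q}{q+1}<r<\infty$). The function $\sinh_{p,q}:[0,\pi_{r,q}/2)\to[0,\infty)$ is the inverse of $G_{p,q}$ and $\cosh_{p,q}x=\frac{d}{dx}\sinh_{p,q}x$. *)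

theory Defs
  imports "HOL-Analysis.Analysis"
begin

definition F_pq :: "real \<Rightarrow> real \<Rightarrow> real \<Rightarrow> real" where
  "F_pq p q y = integral {0..y} (\<lambda>t. (1 - t powr q) powr (- 1 / p))"

text \<open>pi_{p,q} = 2 * (improper) integral from 0 to 1, as an extended real (may be infinite).
  The improper integral of the nonnegative integrand is the supremum of F_{p,q} over [0,1).\<close>
definition pi_pq :: "real \<Rightarrow> real \<Rightarrow> ereal" where
  "pi_pq p q = 2 * (SUP y\<in>{0..<1}. ereal (F_pq p q y))"

definition sin_pq :: "real \<Rightarrow> real \<Rightarrow> real \<Rightarrow> real" where
  "sin_pq p q x = (THE y. y \<in> {0..<1} \<and> F_pq p q y = x)"

definition cos_pq :: "real \<Rightarrow> real \<Rightarrow> real \<Rightarrow> real" where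
  "cos_pq p q x = deriv (sin_pq p q) x"

definition G_pq :: "real \<Rightarrow> real \<Rightarrow> real \<Rightarrow> real" where
  "G_pq p q y = integral {0..y} (\<lambda>t. (1 + t powr q) powr (- 1 / p))"

definition sinh_pq :: "real \<Rightarrow> real \<Rightarrow> real \<Rightarrow> real" where
  "sinh_pq p q x = (THE y. 0 \<le> y \<and> G_pq p q y = x)"

definition cosh_pq :: "real \<Rightarrow> real \<Rightarrow> real \<Rightarrow> real" where
  "cosh_pq p q x = deriv (sinh_pq p q) x"

end

theory Submission
  imports Defs
begin

text \<open>
  Put c = r/(p+r) = q/(p(q+1)); then 0 < c < 1 is exactly the hypothesis q/(q+1) < p, and
  c (1 + 1/q) = 1/p. For y = sin x we have F(y) = x and cos(x)^p = 1 - y^q, so the claim reads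
  y (1 - c y^q)^(-1/q) < F(y). Both sides vanish at 0, and the derivative (1 - c t^q)^(-1-1/q)
  of the left side is below F'(t) = (1 - t^q)^(-c(1+1/q)), because c ln (1 - w) < ln (1 - c w)
  for w = t^q by strict concavity of ln. The hyperbolic case is the same with w = -t^q; that
  every x < \<pi>_{r,q}/2 is a value of G_{p,q} follows from the substitution
  u = t (1 - t^q)^(-1/q), which transforms F_{r,q} into G_{p,q}.
\<close>

lemma powr_less_one_of_less_one:
  fixes t q :: real
  assumes "0 \<le> t" "t < 1" "0 < q"
  shows "t powr q < 1"
  using powr_less_mono2[OF assms(3,1,2)] by simp

lemma one_minus_mult_pos:
  fixes c w :: real
  assumes "0 < c" "c < 1" "w < 1"
  shows "0 < 1 - c * w"
proof (cases "w \<le> 0")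
  case True
  then show ?thesis using mult_nonneg_nonpos[of c w] assms(1) by linarith
next
  case False
  then have "c * w < w" using assms(2) by simp
  then show ?thesis using assms(3) by linarith
qed

lemma indefinite_integral_has_real_derivative_at:
  fixes f :: "real \<Rightarrow> real"
  assumes "continuous_on {a..b} f" "a < y" "y < b"
  shows "((\<lambda>x. integral {a..x} f) has_real_derivative f y) (at y)"
proof -
  have "((\<lambda>x. integral {a..x} f) has_real_derivative f y) (at y within {a..b})"
    using assms by (intro integral_has_real_derivative) auto
  then show ?thesis using at_within_interior[of y "{a..b}"] assms(2,3) by simp
qed

lemma DERIV_inverse_function_open:
  fixes f g :: "real \<Rightarrow> real"
  assumes "open S" "x \<in> S" "continuous_on S f" "\<And>y. y \<in> S \<Longrightarrow> g (f y) = y"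
    and "(f has_real_derivative D) (at x)" "D \<noteq> 0"
  shows "(g has_real_derivative inverse D) (at (f x))"
proof -
  have "(f has_derivative (*) D) (at x)"
    using assms(5) by (simp add: has_field_derivative_def)
  moreover have "(*) D \<circ> (*) (inverse D) = id" using assms(6) by (simp add: fun_eq_iff)
  ultimately show ?thesis
    unfolding has_field_derivative_def using has_derivative_inverse_strong[OF assms(1-4)] by blast
qed

lemma strict_mono_on_if_pos_deriv:
  fixes \<Phi> \<phi> :: "real \<Rightarrow> real"
  assumes "is_interval D" "D \<subseteq> {0..}"
    and cont: "\<And>y. y \<in> D \<Longrightarrow> continuous_on {0..y} \<Phi>"
    and deriv: "\<And>y. y \<in> interior D \<Longrightarrow> (\<Phi> has_real_derivative \<phi> y) (at y)"
    and pos: "\<And>y. y \<in> interior D \<Longrightarrow> 0 < \<phi> y"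
  shows "strict_mono_on D \<Phi>"
proof (rule strict_mono_onI)
  fix y z assume yz: "y \<in> D" "z \<in> D" "y < z"
  have "{y<..<z} \<subseteq> D"
    using assms(1) yz unfolding is_interval_1 by fastforce
  then have sub: "{y<..<z} \<subseteq> interior D"
    by (simp add: interior_maximal)
  show "\<Phi> y < \<Phi> z"
  proof (rule DERIV_pos_imp_increasing_open[OF \<open>y < z\<close>])
    fix t assume "y < t" "t < z"
    then have "t \<in> interior D" using sub by auto
    then show "\<exists>d. (\<Phi> has_real_derivative d) (at t) \<and> 0 < d"
      using deriv pos by blast
  next
    show "continuous_on {y..z} \<Phi>"
      using assms(2) yz by (intro continuous_on_subset[OF cont[of z]]) auto
  qed
qed

lemma the_inv_into_primitive_has_real_derivative:
  fixes \<Phi> \<phi> :: "real \<Rightarrow> real"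
  assumes D: "is_interval D" "0 \<in> D" "D \<subseteq> {0..}"
    and \<Phi>0: "\<Phi> 0 = 0"
    and cont: "\<And>y. y \<in> D \<Longrightarrow> continuous_on {0..y} \<Phi>"
    and deriv: "\<And>y. y \<in> interior D \<Longrightarrow> (\<Phi> has_real_derivative \<phi> y) (at y)"
    and pos: "\<And>y. y \<in> interior D \<Longrightarrow> 0 < \<phi> y"
    and x: "0 < x" "z \<in> D" "x < \<Phi> z"
  obtains y where "y \<in> interior D" "\<Phi> y = x" "the_inv_into D \<Phi> x = y"
    "(the_inv_into D \<Phi> has_real_derivative inverse (\<phi> y)) (at x)"
proof -
  have inj: "inj_on \<Phi> D"
    by (rule strict_mono_on_imp_inj_on[OF strict_mono_on_if_pos_deriv[OF D(1,3) cont deriv pos]])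
  have "\<Phi> 0 \<le> x" "x \<le> \<Phi> z" "0 \<le> z" using \<Phi>0 x D(3) by auto
  from IVT'[OF this cont[OF x(2)]] obtain y where y: "0 \<le> y" "y \<le> z" "\<Phi> y = x"
    by blast
  have "{0<..<z} \<subseteq> D"
    using D(1,2) x(2) unfolding is_interval_1 by fastforce
  then have "{0<..<z} \<subseteq> interior D"
    by (simp add: interior_maximal)
  moreover have "0 < y" "y < z" using y x \<Phi>0 by (auto simp: le_less)
  ultimately have y_int: "y \<in> interior D" by auto
  then have "y \<in> D" using interior_subset by blast
  then have y_inv: "the_inv_into D \<Phi> x = y"
    using the_inv_into_f_f[OF inj] y(3) by blast
  have "continuous_on (interior D) \<Phi>"
    using deriv by (intro continuous_at_imp_continuous_on ballI DERIV_isCont) blast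
  moreover have "the_inv_into D \<Phi> (\<Phi> u) = u" if "u \<in> interior D" for u
    using the_inv_into_f_f[OF inj] interior_subset that by blast
  ultimately have "(the_inv_into D \<Phi> has_real_derivative inverse (\<phi> y)) (at (\<Phi> y))"
    using y_int deriv[OF y_int] pos[OF y_int]
    by (intro DERIV_inverse_function_open[where S = "interior D"]) auto
  then show ?thesis using that y_int y(3) y_inv by blast
qed

lemma continuous_on_F_pq_integrand:
  fixes p q b :: real
  assumes "0 < q" "b < 1"
  shows "continuous_on {0..b} (\<lambda>t. (1 - t powr q) powr (- 1 / p))"
proof -
  have "0 < 1 - t powr q" if "t \<in> {0..b}" for t
    using that assms powr_less_one_of_less_one[of t q] by auto
  with assms show ?thesis by (intro continuous_on_powr' continuous_intros) fastforce+
qed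

lemma continuous_on_G_pq_integrand:
  fixes p q b :: real
  assumes "0 < q"
  shows "continuous_on {0..b} (\<lambda>t. (1 + t powr q) powr (- 1 / p))"
proof -
  have "0 < 1 + t powr q" for t :: real by (simp add: add_pos_nonneg)
  then have "0 \<le> 1 + t powr q" "1 + t powr q \<noteq> 0" for t :: real
    using less_imp_le less_irrefl by metis+
  with assms show ?thesis by (intro continuous_on_powr' continuous_intros) fastforce+
qed

lemma F_pq_has_real_derivative:
  assumes "0 < q" "0 < y" "y < 1"
  shows "(F_pq p q has_real_derivative (1 - y powr q) powr (- 1 / p)) (at y)"
  unfolding F_pq_def[abs_def] using assms
  by (intro indefinite_integral_has_real_derivative_at[where b = "(1 + y) / 2"]
      continuous_on_F_pq_integrand) auto

lemma continuous_on_F_pq: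
  assumes "0 < q" "b < 1"
  shows "continuous_on {0..b} (F_pq p q)"
  unfolding F_pq_def[abs_def] using assms
  by (intro indefinite_integral_continuous_1 integrable_continuous_real
      continuous_on_F_pq_integrand)

lemma G_pq_has_real_derivative:
  assumes "0 < q" "0 < y"
  shows "(G_pq p q has_real_derivative (1 + y powr q) powr (- 1 / p)) (at y)"
  unfolding G_pq_def[abs_def] using assms
  by (intro indefinite_integral_has_real_derivative_at[where b = "y + 1"]
      continuous_on_G_pq_integrand) auto

lemma continuous_on_G_pq:
  assumes "0 < q"
  shows "continuous_on {0..b} (G_pq p q)"
  unfolding G_pq_def[abs_def] using assms
  by (intro indefinite_integral_continuous_1 integrable_continuous_real
      continuous_on_G_pq_integrand)

lemma less_half_pi_pq_iff: "ereal x < pi_pq p q / 2 \<longleftrightarrow> (\<exists>y\<in>{0..<1}. x < F_pq p q y)"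
proof -
  have "pi_pq p q / 2 = (SUP y\<in>{0..<1}. ereal (F_pq p q y))"
    unfolding pi_pq_def by (cases "SUP y\<in>{0..<1}. ereal (F_pq p q y)") auto
  then show ?thesis by (simp add: less_SUP_iff)
qed

lemma mult_ln_one_minus_less:
  fixes c w :: real
  assumes c: "0 < c" "c < 1" and w: "w < 1" "w \<noteq> 0"
  shows "c * ln (1 - w) < ln (1 - c * w)"
proof -
  define f where "f v = ln (1 - c * v) - c * ln (1 - v)" for v
  define f' where "f' v = c * (1 - c) * v / ((1 - v) * (1 - c * v))" for v
  have deriv: "(f has_real_derivative f' v) (at v)" if "v < 1" for v
  proof -
    have "0 < 1 - c * v" using one_minus_mult_pos[OF c that] .
    moreover have "(f has_real_derivative - c / (1 - c * v) + c / (1 - v)) (at v)"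
      unfolding f_def using calculation that
      by (auto intro!: derivative_eq_intros simp: field_simps)
    ultimately show ?thesis
      using that by (simp add: f'_def field_simps)
  qed
  have sign: "0 < f' v \<longleftrightarrow> 0 < v" "f' v < 0 \<longleftrightarrow> v < 0" if "v < 1" for v
    using that c one_minus_mult_pos[OF c that]
    by (auto simp: f'_def zero_less_divide_iff divide_less_0_iff zero_less_mult_iff mult_less_0_iff)
  have cont: "continuous_on {a..b} f" if "b < 1" for a b
    using that by (intro continuous_at_imp_continuous_on ballI DERIV_isCont[OF deriv]) auto
  have "f 0 < f w"
  proof (cases "0 < w")
    case True
    show ?thesis
    proof (rule DERIV_pos_imp_increasing_open[OF True _ cont[OF w(1)]])
      fix v assume "0 < v" "v < w"
      with w show "\<exists>d. (f has_real_derivative d) (at v) \<and> 0 < d"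
        using deriv sign by (intro exI[of _ "f' v"]) auto
    qed
  next
    case False
    then have "w < 0" using w(2) by simp
    then show ?thesis
    proof (rule DERIV_neg_imp_decreasing_open[OF _ _ cont])
      fix v assume "w < v" "v < 0"
      then show "\<exists>d. (f has_real_derivative d) (at v) \<and> d < 0"
        using deriv sign by (intro exI[of _ "f' v"]) auto
    qed simp
  qed
  then show ?thesis by (simp add: f_def)
qed

lemma one_minus_mult_powr_less:
  fixes p q c w :: real
  assumes q: "0 < q" and c: "0 < c" "c < 1" "c * (1 + 1/q) = 1/p" and w: "w < 1" "w \<noteq> 0"
  shows "(1 - c * w) powr (- 1 / q - 1) < (1 - w) powr (- 1 / p)"
proof -
  have "(1 + 1/q) * (c * ln (1 - w)) < (1 + 1/q) * ln (1 - c * w)"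
    using mult_ln_one_minus_less[OF c(1,2) w] q by (simp add: add_pos_pos)
  also have "(1 + 1/q) * (c * ln (1 - w)) = 1/p * ln (1 - w)"
    by (metis c(3) mult.assoc mult.commute)
  finally have "(- 1 / q - 1) * ln (1 - c * w) < (- 1 / p) * ln (1 - w)"
    using c(3) by (simp add: algebra_simps)
  then show ?thesis
    using one_minus_mult_pos[OF c(1,2) w(1)] w(1) by (simp add: powr_def)
qed

definition stretch :: "real \<Rightarrow> real \<Rightarrow> real \<Rightarrow> real" where
  "stretch q c y = y * (1 - c * y powr q) powr (- 1 / q)"

lemma stretch_0 [simp]: "stretch q c 0 = 0"
  by (simp add: stretch_def)

lemma stretch_nonneg: "0 \<le> y \<Longrightarrow> 0 \<le> stretch q c y"
  by (simp add: stretch_def)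

lemma stretch_has_real_derivative:
  fixes q c t :: real
  assumes "0 < q" "0 < t" "0 < 1 - c * t powr q"
  shows "(stretch q c has_real_derivative (1 - c * t powr q) powr (- 1 / q - 1)) (at t)"
proof -
  define A where "A = 1 - c * t powr q"
  have "A powr (- 1 / q) = A powr (- 1 / q - 1) * A"
    using powr_add[of A "- 1 / q - 1" 1] assms(3) by (simp add: A_def)
  moreover have "t powr (q - 1) * t = t powr q"
    using powr_mult_base[of t "q - 1"] assms(2) by (simp add: mult.commute)
  ultimately have "A powr (- 1 / q) + A powr (- 1 / q - 1) * (t powr (q - 1) * c) * t
      = A powr (- 1 / q - 1) * (A + c * t powr q)"
    by (simp add: algebra_simps)
  also have "\<dots> = A powr (- 1 / q - 1)" by (simp add: A_def)
  finally show ?thesis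
    unfolding stretch_def using assms by (auto intro!: derivative_eq_intros simp: A_def)
qed

lemma continuous_on_stretch:
  fixes q c b :: real
  assumes "0 < q" "\<And>t. t \<in> {0..b} \<Longrightarrow> 0 < 1 - c * t powr q"
  shows "continuous_on {0..b} (stretch q c)"
proof -
  have "continuous_on {0..b} (\<lambda>t. 1 - c * t powr q)"
    using assms(1) by (intro continuous_on_powr' continuous_intros) auto
  moreover have "\<forall>t\<in>{0..b}. 0 \<le> 1 - c * t powr q \<and> (1 - c * t powr q = 0 \<longrightarrow> 0 < - 1 / q)"
    using assms(2) by (metis less_imp_le less_irrefl)
  ultimately have "continuous_on {0..b} (\<lambda>t. (1 - c * t powr q) powr (- 1 / q))"
    by (rule continuous_on_powr'[OF _ continuous_on_const])
  then show ?thesis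
    unfolding stretch_def by (rule continuous_on_mult[OF continuous_on_id])
qed

lemma div_primitive_less_powr:
  fixes \<Phi> :: "real \<Rightarrow> real" and p q c s y :: real
  assumes q: "0 < q" and c: "0 < c" "c < 1" "c * (1 + 1/q) = 1/p"
    and s: "s \<noteq> 0" and y: "0 < y" and below: "\<And>t. t \<in> {0..y} \<Longrightarrow> s * t powr q < 1"
    and \<Phi>0: "\<Phi> 0 = 0" and cont: "continuous_on {0..y} \<Phi>"
    and deriv: "\<And>t. 0 < t \<Longrightarrow> t < y \<Longrightarrow>
      (\<Phi> has_real_derivative (1 - s * t powr q) powr (- 1 / p)) (at t)"
  shows "y / \<Phi> y < (1 - c * s * y powr q) powr (1 / q)"
proof -
  have pos: "0 < 1 - c * s * t powr q" if "t \<in> {0..y}" for t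
    using one_minus_mult_pos[OF c(1,2) below[OF that]] by (simp add: mult.assoc)
  have "\<Phi> 0 - stretch q (c * s) 0 < \<Phi> y - stretch q (c * s) y"
  proof (rule DERIV_pos_imp_increasing_open[OF y])
    fix t assume t: "0 < t" "t < y"
    then have "(1 - c * (s * t powr q)) powr (- 1 / q - 1) < (1 - s * t powr q) powr (- 1 / p)"
      using below s by (intro one_minus_mult_powr_less[OF q c]) auto
    moreover have "((\<lambda>t. \<Phi> t - stretch q (c * s) t) has_real_derivative
        (1 - s * t powr q) powr (- 1 / p) - (1 - c * s * t powr q) powr (- 1 / q - 1)) (at t)"
      using t pos by (intro DERIV_diff deriv stretch_has_real_derivative q) auto
    ultimately show "\<exists>d. ((\<lambda>t. \<Phi> t - stretch q (c * s) t) has_real_derivative d) (at t) \<and> 0 < d"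
      by (auto simp: mult.assoc)
  next
    show "continuous_on {0..y} (\<lambda>t. \<Phi> t - stretch q (c * s) t)"
      using pos by (intro continuous_intros cont continuous_on_stretch q) auto
  qed
  then have less: "stretch q (c * s) y < \<Phi> y" by (simp add: \<Phi>0 stretch_def)
  have A: "0 < 1 - c * s * y powr q" using pos y by simp
  then have "0 < stretch q (c * s) y" using y by (simp add: stretch_def)
  then have "y / \<Phi> y < y / stretch q (c * s) y"
    using less y by (intro divide_strict_left_mono) auto
  also have "\<dots> = (1 - c * s * y powr q) powr (1 / q)"
    using y A by (simp add: stretch_def powr_minus divide_inverse)
  finally show ?thesis .
qed

lemma stretch_powr:
  fixes q t :: real
  assumes "0 < q" "0 \<le> t" "t powr q < 1"
  shows "stretch q 1 t powr q = t powr q / (1 - t powr q)"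
proof -
  have "stretch q 1 t powr q = t powr q * ((1 - t powr q) powr (- 1 / q)) powr q"
    using assms by (simp add: stretch_def powr_mult)
  also have "\<dots> = t powr q / (1 - t powr q)"
    using assms by (subst powr_powr) (simp add: powr_minus divide_inverse)
  finally show ?thesis .
qed

lemma G_pq_stretch:
  fixes p q r s :: real
  assumes q: "0 < q" and r: "1 / r = 1 + 1 / q - 1 / p" and s: "0 \<le> s" "s < 1"
  shows "G_pq p q (stretch q 1 s) = F_pq r q s"
proof -
  have below: "t powr q < 1" if "t \<in> {0..s}" for t
    using powr_less_one_of_less_one[of t q] that s q by auto
  have mono: "stretch q 1 t \<le> stretch q 1 s" if "t \<in> {0..s}" for t
  proof -
    have "t powr q \<le> s powr q" using that q by (intro powr_mono2) auto
    then have "(1 - t powr q) powr (- 1 / q) \<le> (1 - s powr q) powr (- 1 / q)"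
      using below[of s] s q by (intro powr_mono2') auto
    then show ?thesis using that by (auto simp: stretch_def intro!: mult_mono)
  qed
  have integrand: "(1 - t powr q) powr (- 1 / q - 1) * (1 + stretch q 1 t powr q) powr (- 1 / p)
      = (1 - t powr q) powr (- 1 / r)" if "t \<in> {0..s}" for t
  proof -
    define B where "B = 1 - t powr q"
    have B: "0 < B" using below[OF that] by (simp add: B_def)
    have "1 + stretch q 1 t powr q = inverse B"
      using that q below[OF that] B by (simp add: stretch_powr B_def field_simps)
    then have "(1 + stretch q 1 t powr q) powr (- 1 / p) = B powr (1 / p)"
      using B by (simp add: inverse_powr powr_minus)
    then have "B powr (- 1 / q - 1) * (1 + stretch q 1 t powr q) powr (- 1 / p)
        = B powr (- 1 / q - 1 + 1 / p)"
      using B by (simp add: powr_add)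
    also have "- 1 / q - 1 + 1 / p = - 1 / r" using r by simp
    finally show ?thesis by (simp add: B_def)
  qed
  have "((\<lambda>t. (1 - t powr q) powr (- 1 / q - 1) *\<^sub>R (1 + stretch q 1 t powr q) powr (- 1 / p))
      has_integral integral {stretch q 1 0..stretch q 1 s} (\<lambda>u. (1 + u powr q) powr (- 1 / p))) {0..s}"
  proof (rule has_integral_substitution_strong[where s = "{0}" and c = 0 and d = "stretch q 1 s"
        and g = "stretch q 1" and g' = "\<lambda>t. (1 - t powr q) powr (- 1 / q - 1)"
        and f = "\<lambda>u. (1 + u powr q) powr (- 1 / p)"])
    show "continuous_on {0..stretch q 1 s} (\<lambda>u. (1 + u powr q) powr (- 1 / p))"
      by (rule continuous_on_G_pq_integrand[OF q])
    show "continuous_on {0..s} (stretch q 1)"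
      using below by (intro continuous_on_stretch q) simp
    show "stretch q 1 ` {0..s} \<subseteq> {0..stretch q 1 s}"
      using mono stretch_nonneg by auto
    show "(stretch q 1 has_real_derivative (1 - t powr q) powr (- 1 / q - 1)) (at t within {0..s})"
      if "t \<in> {0..s} - {0}" for t
    proof -
      have "(stretch q 1 has_real_derivative (1 - 1 * t powr q) powr (- 1 / q - 1)) (at t)"
        using that below by (intro stretch_has_real_derivative q) auto
      then show ?thesis using has_field_derivative_at_within by simp
    qed
    show "stretch q 1 0 \<le> stretch q 1 s" using stretch_nonneg[OF s(1)] by simp
    show "finite {0::real}" by simp
    show "0 \<le> s" by (rule s(1))
  qed
  then have "((\<lambda>t. (1 - t powr q) powr (- 1 / q - 1) * (1 + stretch q 1 t powr q) powr (- 1 / p))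
      has_integral G_pq p q (stretch q 1 s)) {0..s}"
    by (simp add: G_pq_def)
  then have "((\<lambda>t. (1 - t powr q) powr (- 1 / r)) has_integral G_pq p q (stretch q 1 s)) {0..s}"
    by (rule has_integral_eq[rotated]) (rule integrand)
  then show ?thesis by (simp add: F_pq_def integral_unique)
qed

lemma sin_pq_div_less:
  fixes p q c x :: real
  assumes q: "0 < q" and c: "0 < c" "c < 1" "c * (1 + 1/q) = 1/p"
    and x: "0 < x" "ereal x < pi_pq p q / 2"
  shows "sin_pq p q x / x < (1 - c * (1 - cos_pq p q x powr p)) powr (1 / q)"
proof -
  have "0 < c * (1 + 1/q)" using c(1) q by (intro mult_pos_pos add_pos_pos) auto
  then have "p \<noteq> 0" using c(3) by auto
  obtain z where z: "z \<in> {0..<1}" "x < F_pq p q z"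
    using x(2) less_half_pi_pq_iff by blast
  have sin_pq: "sin_pq p q = the_inv_into {0..<1} (F_pq p q)"
    by (simp add: fun_eq_iff sin_pq_def the_inv_into_def)
  have F_deriv: "(F_pq p q has_real_derivative (1 - t powr q) powr (- 1 / p)) (at t)"
    if "t \<in> interior {0..<1}" for t
    using that q by (intro F_pq_has_real_derivative) auto
  have F_cont: "continuous_on {0..t} (F_pq p q)" if "t \<in> {0..<1}" for t
    using that q by (intro continuous_on_F_pq) auto
  have below: "t powr q < 1" if "0 \<le> t" "t < 1" for t
    using that q by (intro powr_less_one_of_less_one)
  have F_pos: "0 < (1 - t powr q) powr (- 1 / p)" if "t \<in> interior {0..<1}" for t
    using that below[of t] q by auto
  have "0 \<in> {0..<1::real}" "{0..<1::real} \<subseteq> {0..}" "F_pq p q 0 = 0"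
    by (auto simp: F_pq_def)
  from the_inv_into_primitive_has_real_derivative[OF is_interval_co this F_cont F_deriv F_pos x(1) z]
  obtain y where y: "y \<in> interior {0..<1}" "F_pq p q y = x" "sin_pq p q x = y"
    and deriv: "(sin_pq p q has_real_derivative inverse ((1 - y powr q) powr (- 1 / p))) (at x)"
    unfolding sin_pq by blast
  have "cos_pq p q x = (1 - y powr q) powr (1 / p)"
    using deriv by (simp add: cos_pq_def DERIV_imp_deriv powr_minus)
  then have cos_p: "cos_pq p q x powr p = 1 - y powr q"
    using \<open>p \<noteq> 0\<close> below[of y] y(1) by (simp add: powr_powr)
  have "y / F_pq p q y < (1 - c * 1 * y powr q) powr (1 / q)"
  proof (rule div_primitive_less_powr[OF q c])
    show "0 < y" using y(1) by simp
    show "1 * t powr q < 1" if "t \<in> {0..y}" for t using that y(1) below by auto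
    show "F_pq p q 0 = 0" by (simp add: F_pq_def)
    show "continuous_on {0..y} (F_pq p q)" using y(1) F_cont by auto
    show "(F_pq p q has_real_derivative (1 - 1 * t powr q) powr (- 1 / p)) (at t)"
      if "0 < t" "t < y" for t using that y(1) F_deriv by auto
  qed simp
  then show ?thesis using y cos_p by simp
qed

lemma sinh_pq_div_less:
  fixes p q r c x :: real
  assumes q: "0 < q" and c: "0 < c" "c < 1" "c * (1 + 1/q) = 1/p"
    and r: "1 / r = 1 + 1 / q - 1 / p"
    and x: "0 < x" "ereal x < pi_pq r q / 2"
  shows "sinh_pq p q x / x < (1 - c * (1 - cosh_pq p q x powr p)) powr (1 / q)"
proof -
  have "0 < c * (1 + 1/q)" using c(1) q by (intro mult_pos_pos add_pos_pos) auto
  then have "p \<noteq> 0" using c(3) by auto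
  obtain z where z: "z \<in> {0..<1}" "x < F_pq r q z"
    using x(2) less_half_pi_pq_iff by blast
  then have z': "stretch q 1 z \<in> {0..}" "x < G_pq p q (stretch q 1 z)"
    using G_pq_stretch[OF q r] stretch_nonneg by auto
  have sinh_pq: "sinh_pq p q = the_inv_into {0..} (G_pq p q)"
    by (simp add: fun_eq_iff sinh_pq_def the_inv_into_def)
  have G_deriv: "(G_pq p q has_real_derivative (1 + t powr q) powr (- 1 / p)) (at t)"
    if "t \<in> interior {0..}" for t
    using that q by (intro G_pq_has_real_derivative) auto
  have G_cont: "continuous_on {0..t} (G_pq p q)" for t
    using q by (rule continuous_on_G_pq)
  have pos: "0 < 1 + t powr q" for t :: real
    by (simp add: add_pos_nonneg)
  then have G_pos: "0 < (1 + t powr q) powr (- 1 / p)" for t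
    by (metis powr_gt_zero order_less_irrefl)
  have "0 \<in> {0::real..}" "{0::real..} \<subseteq> {0..}" "G_pq p q 0 = 0"
    by (auto simp: G_pq_def)
  from the_inv_into_primitive_has_real_derivative[OF is_interval_ci this G_cont G_deriv G_pos x(1) z']
  obtain y where y: "y \<in> interior {0..}" "G_pq p q y = x" "sinh_pq p q x = y"
    and deriv: "(sinh_pq p q has_real_derivative inverse ((1 + y powr q) powr (- 1 / p))) (at x)"
    unfolding sinh_pq by blast
  have "cosh_pq p q x = (1 + y powr q) powr (1 / p)"
    using deriv by (simp add: cosh_pq_def DERIV_imp_deriv powr_minus)
  then have cosh_p: "cosh_pq p q x powr p = 1 + y powr q"
    using \<open>p \<noteq> 0\<close> pos[of y] by (simp add: powr_powr)
  have "y / G_pq p q y < (1 - c * (- 1) * y powr q) powr (1 / q)"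
  proof (rule div_primitive_less_powr[OF q c])
    show "0 < y" using y(1) by simp
    show "- 1 * t powr q < 1" if "t \<in> {0..y}" for t using powr_ge_zero[of t q] by linarith
    show "G_pq p q 0 = 0" by (simp add: G_pq_def)
    show "(G_pq p q has_real_derivative (1 - - 1 * t powr q) powr (- 1 / p)) (at t)"
      if "0 < t" "t < y" for t using that G_deriv by auto
  qed (use G_cont in simp_all)
  then show ?thesis using y cosh_p by (simp add: algebra_simps)
qed

lemma r_div_p_plus_r_props:
  fixes p q r :: real
  assumes q: "0 < q" and p: "q / (q + 1) < p" and r: "r = p * q / (p * q + p - q)"
  shows "0 < r / (p + r)" "r / (p + r) < 1" "r / (p + r) * (1 + 1 / q) = 1 / p"
    and "1 / r = 1 + 1 / q - 1 / p"
proof -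
  have "0 < q / (q + 1)" using q by simp
  then have "0 < p" using p by linarith
  have qp: "q < p * (q + 1)" using q p by (simp add: divide_less_eq add_pos_pos)
  then have D: "0 < p * q + p - q" by (simp add: algebra_simps)
  have pq: "0 < p * (q + 1)" using q \<open>0 < p\<close> by simp
  have "p + r = p * p * (q + 1) / (p * q + p - q)"
    using D by (simp add: r field_simps)
  then have c: "r / (p + r) = q / (p * (q + 1))"
    using q \<open>0 < p\<close> D by (simp add: r)
  show "0 < r / (p + r)" "r / (p + r) < 1"
    using q qp pq by (auto simp: c divide_less_eq)
  have "r / (p + r) * (1 + 1 / q) = q / (p * (q + 1)) * ((q + 1) / q)"
    using q by (simp add: c add_divide_distrib)
  then show "r / (p + r) * (1 + 1 / q) = 1 / p"
    using q pq by simp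
  show "1 / r = 1 + 1 / q - 1 / p"
    using q \<open>0 < p\<close> D by (simp add: r field_simps)
qed

theorem theorem3p5:
  fixes p q r :: real
  assumes "0 < q" and "q / (q + 1) < p"
    and r_def: "r = p * q / (p * q + p - q)"
  shows "(\<forall>x. 0 < x \<and> ereal x < pi_pq p q / 2 \<longrightarrow>
            sin_pq p q x / x < ((p + r * (cos_pq p q x) powr p) / (p + r)) powr (1 / q))
       \<and> (\<forall>x. 0 < x \<and> ereal x < pi_pq r q / 2 \<longrightarrow>
            sinh_pq p q x / x < ((p + r * (cosh_pq p q x) powr p) / (p + r)) powr (1 / q))"
proof -
  define c where "c = r / (p + r)"
  have c: "0 < c" "c < 1" "c * (1 + 1 / q) = 1 / p" and r: "1 / r = 1 + 1 / q - 1 / p"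
    using r_div_p_plus_r_props[OF assms] unfolding c_def by auto
  have "p + r \<noteq> 0" using c(1) by (auto simp: c_def)
  then have mean: "(p + r * C) / (p + r) = 1 - c * (1 - C)" for C
    by (simp add: c_def field_simps)
  show ?thesis
    using sin_pq_div_less[OF assms(1) c] sinh_pq_div_less[OF assms(1) c r] by (simp add: mean)
qed

end
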